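(* Let $\mathbb{F}$ be a field, $d\geq3$ and $V$ a vector space over $\mathbb{F}$ of dimension $d+1$. Let $E^*_0,\dots,E^*_d$ be a system of mutually orthogonal idempotents in $\mathrm{End}(V)$ and $A\in\mathrm{End}(V)$ with $E^*_iAE^*_j=0$ if $|i-j|>1$ and $E^*_iAE^*_j\neq0$ if $|i-j|=1$. Assume $A$ is multiplicity-free and bipartite with primitive idempotents $E_0,\dots,E_d$ and eigenvalues $\theta_0,\dots,\theta_d$. Let $\theta^*_0,\dots,\theta^*_d\in\mathbb{F}$ be mutually distinct and $A^*=\sum_i\theta^*_iE^*_i$. Assume $E_0$ is normalizing and that in $\Delta$ the vertex $E_0$ is adjacent to $E_1$ and no other vertex. Fix a basis $v_0,\dots,v_d$ with $v_i\in E^*_iV$, and let $b_i,c_i,\alpha_i$ be as in the context. Then for $1\le i\le d-1$, $$b_i=\frac{\theta_1(\theta^*_i-\theta^*_0)-\theta_0(\theta^*_{i-1}-\theta^*_1)}{\theta^*_{i+1}-\theta^*_{i-1}}\cdot\frac{\alpha_i}{\alpha_{i+1}},\qquad c_i=\frac{\theta_0(\theta^*_{i+1}-\theta^*_1)-\theta_1(\theta^*_i-\theta^*_0)}{\theta^*_{i+1}-\theta^*_{i-1}}\cdot\frac{\alpha_i}{\alpha_{i-1}}.$$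
   Context: A system of mutually orthogonal idempotents: $E^*_iE^*_j=\delta_{ij}E^*_i$, $\operatorname{rank}E^*_i=1$. $A$ multiplicity-free: $d+1$ distinct eigenvalues in $\mathbb{F}$; $E_i$ is the projection onto the $\theta_i$-eigenspace along the other eigenspaces. Bipartite: $\operatorname{tr}(E^*_iA)=0$ for all $i$. $\Delta$: graph on $E_0,\dots,E_d$ with $E_i\neq E_j$ adjacent iff $E_iA^*E_j\neq0$. The matrix $Y$ representing $A$ w.r.t. a basis $v_0,\dots,v_d$ satisfies $Av_j=\sum_iY_{ij}v_i$. An eigenvalue $\theta$ is normalizing if some basis $v_i\in E^*_iV$ makes every row sum of the matrix representing $A$ equal to $\theta$; $E_i$ is normalizing if $\theta_i$ is. For the fixed basis $v_i\in E^*_iV$, the matrix of $A$ is tridiagonal with zero diagonal; $b_i$ ($0\le i\le d-1$) denotes its $(i,i+1)$-entry and $c_i$ ($1\le i\le d$) its $(i,i-1)$-entry (all nonzero); set $b_d=c_0=0$. The cosine sequence $\alpha_0,\dots,\alpha_d$ for $\theta_0$ is defined by $\alpha_0=1$ and $c_i\alpha_{i-1}+b_i\alpha_{i+1}=\theta_0\alpha_i$ for $0\le i\le d-1$; equivalently $\sum_i\alpha_iv_i$ is the eigenvector of $A$ for $\theta_0$ with $\alpha_0=1$. Since $E_0$ is normalizing, all $\alpha_i$ are nonzero. *)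

theory Defs
  imports "Jordan_Normal_Form.Matrix" "Jordan_Normal_Form.Char_Poly" "Jordan_Normal_Form.DL_Rank"
begin

(* V = F^(d+1) (column vectors of dimension n = d+1); End(V) = n x n matrices. *)

definition mat_trace :: "'a::comm_ring_1 mat \<Rightarrow> 'a" where
  "mat_trace M = (\<Sum>i<dim_row M. M $$ (i,i))"

definition in_image :: "'a::comm_ring_1 mat \<Rightarrow> 'a vec \<Rightarrow> bool" where
  "in_image M v = (\<exists>w \<in> carrier_vec (dim_col M). v = M *\<^sub>v w)"

definition lincomb_vec :: "nat \<Rightarrow> (nat \<Rightarrow> 'a::comm_ring_1) \<Rightarrow> (nat \<Rightarrow> 'a vec) \<Rightarrow> nat set \<Rightarrow> 'a vec" where
  "lincomb_vec n c u I = vec n (\<lambda>r. \<Sum>i\<in>I. c i * (u i $ r))"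

definition lincomb_mat :: "nat \<Rightarrow> (nat \<Rightarrow> 'a::comm_ring_1) \<Rightarrow> (nat \<Rightarrow> 'a mat) \<Rightarrow> nat set \<Rightarrow> 'a mat" where
  "lincomb_mat n c M I = mat n n (\<lambda>(r,s). \<Sum>i\<in>I. c i * (M i $$ (r,s)))"

(* E is the projection onto the th(i)-eigenspace of A along the other eigenspaces
   th(j), j \<le> d, j \<noteq> i (n = d+1) *)
definition eig_projection :: "nat \<Rightarrow> 'a::field mat \<Rightarrow> (nat \<Rightarrow> 'a) \<Rightarrow> nat \<Rightarrow> 'a mat \<Rightarrow> bool" where
  "eig_projection d A th i E =
     (E \<in> carrier_mat (d+1) (d+1) \<and>
      (\<forall>x \<in> carrier_vec (d+1).
         A *\<^sub>v (E *\<^sub>v x) = th i \<cdot>\<^sub>v (E *\<^sub>v x) \<and>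
         (\<exists>w. (\<forall>j\<le>d. j \<noteq> i \<longrightarrow> w j \<in> carrier_vec (d+1) \<and> A *\<^sub>v w j = th j \<cdot>\<^sub>v w j) \<and>
              x - E *\<^sub>v x = lincomb_vec (d+1) (\<lambda>_. 1) w ({..d} - {i}))))"

definition represents :: "nat \<Rightarrow> 'a::field mat \<Rightarrow> (nat \<Rightarrow> 'a vec) \<Rightarrow> (nat \<Rightarrow> nat \<Rightarrow> 'a) \<Rightarrow> bool" where
  "represents d A u Y = (\<forall>j\<le>d. A *\<^sub>v u j = lincomb_vec (d+1) (\<lambda>i. Y i j) u {..d})"

(* u_0..u_d is a basis with u_i \<in> E*_i V (nonzero vectors in the rank-one images
   of mutually orthogonal idempotents; they are automatically a basis) *)
definition adapted_basis :: "nat \<Rightarrow> (nat \<Rightarrow> 'a::field mat) \<Rightarrow> (nat \<Rightarrow> 'a vec) \<Rightarrow> bool" where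
  "adapted_basis d Es u = (\<forall>i\<le>d. u i \<in> carrier_vec (d+1) \<and> u i \<noteq> 0\<^sub>v (d+1) \<and> in_image (Es i) (u i))"

definition normalizing :: "nat \<Rightarrow> 'a::field mat \<Rightarrow> (nat \<Rightarrow> 'a mat) \<Rightarrow> 'a \<Rightarrow> bool" where
  "normalizing d A Es \<theta> = (\<exists>u Y. adapted_basis d Es u \<and> represents d A u Y \<and>
       (\<forall>i\<le>d. (\<Sum>j\<le>d. Y i j) = \<theta>))"

end

theory Submission
  imports Defs
begin

text \<open>
  Since \<open>E\<^sub>0\<close> is normalizing, the cosines are nonzero and are the coordinates of a
  \<open>\<theta>\<^sub>0\<close>-eigenvector u. Weighting the coordinate inner product with a symmetrizer of the
  tridiagonal matrix of A gives a nondegenerate bilinear form for which A and \<open>A\<^sup>*\<close> are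
  self-adjoint; hence distinct eigenspaces are orthogonal, every eigenvector is anisotropic and
  \<open>E\<^sub>j\<close> fixes the \<open>\<theta>\<^sub>j\<close>-eigenspace. As \<open>E\<^sub>0 A\<^sup>* E\<^sub>j = 0\<close> for \<open>j \<ge> 2\<close>, the vector
  \<open>A\<^sup>* u\<close> is orthogonal to the \<open>\<theta>\<^sub>j\<close>-eigenspaces with \<open>j \<ge> 2\<close>, so it lies in the sum of the
  \<open>\<theta>\<^sub>0\<close>- and \<open>\<theta>\<^sub>1\<close>-eigenspaces, the first of which is spanned by u. Thus
  \<open>A A\<^sup>* u = \<theta>\<^sub>1 A\<^sup>* u + \<kappa> u\<close>; row 0 gives \<open>\<kappa> = \<theta>\<^sub>0\<theta>\<^sup>*\<^sub>1 - \<theta>\<^sub>1\<theta>\<^sup>*\<^sub>0\<close>, and row i together with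
  the cosine recurrence is a 2x2 linear system for \<open>b\<^sub>i\<close> and \<open>c\<^sub>i\<close>.
\<close>

lemma lincomb_vec_carrier [simp]:
  "lincomb_vec n c u I \<in> carrier_vec n" "dim_vec (lincomb_vec n c u I) = n"
  by (auto simp: lincomb_vec_def)

lemma index_lincomb_vec [simp]:
  "r < n \<Longrightarrow> lincomb_vec n c u I $ r = (\<Sum>i\<in>I. c i * (u i $ r))"
  by (simp add: lincomb_vec_def)

lemma mult_mat_lincomb_vec:
  assumes M: "M \<in> carrier_mat m n" and u: "\<forall>i\<in>I. u i \<in> carrier_vec n"
  shows "M *\<^sub>v lincomb_vec n c u I = lincomb_vec m c (\<lambda>i. M *\<^sub>v u i) I"
proof (rule eq_vecI)
  fix r assume "r < dim_vec (lincomb_vec m c (\<lambda>i. M *\<^sub>v u i) I)"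
  hence r: "r < m" by simp
  have "(M *\<^sub>v lincomb_vec n c u I) $ r = (\<Sum>k<n. M $$ (r,k) * (\<Sum>i\<in>I. c i * (u i $ k)))"
    using M r by (simp add: scalar_prod_def lessThan_atLeast0)
  also have "\<dots> = (\<Sum>i\<in>I. c i * (\<Sum>k<n. M $$ (r,k) * u i $ k))"
    by (simp add: sum_distrib_left sum_distrib_right mult.assoc mult.left_commute sum.swap[of _ I])
  also have "\<dots> = lincomb_vec m c (\<lambda>i. M *\<^sub>v u i) I $ r"
    using M r u by (auto simp: scalar_prod_def lessThan_atLeast0 intro!: sum.cong)
  finally show "(M *\<^sub>v lincomb_vec n c u I) $ r = lincomb_vec m c (\<lambda>i. M *\<^sub>v u i) I $ r" .
qed (use M in auto)

lemma lincomb_mat_mult_vec: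
  assumes "\<forall>i\<in>I. M i \<in> carrier_mat n n" and "x \<in> carrier_vec n"
  shows "lincomb_mat n c M I *\<^sub>v x = lincomb_vec n c (\<lambda>i. M i *\<^sub>v x) I"
proof (rule eq_vecI)
  fix r assume "r < dim_vec (lincomb_vec n c (\<lambda>i. M i *\<^sub>v x) I)"
  hence r: "r < n" by simp
  have "(lincomb_mat n c M I *\<^sub>v x) $ r = (\<Sum>k<n. (\<Sum>i\<in>I. c i * M i $$ (r,k)) * x $ k)"
    using r assms by (simp add: lincomb_mat_def scalar_prod_def lessThan_atLeast0)
  also have "\<dots> = (\<Sum>i\<in>I. c i * (\<Sum>k<n. M i $$ (r,k) * x $ k))"
    by (simp add: sum_distrib_left sum_distrib_right mult.assoc mult.left_commute sum.swap[of _ I])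
  also have "\<dots> = lincomb_vec n c (\<lambda>i. M i *\<^sub>v x) I $ r"
    using r assms by (auto simp: scalar_prod_def lessThan_atLeast0 intro!: sum.cong)
  finally show "(lincomb_mat n c M I *\<^sub>v x) $ r = lincomb_vec n c (\<lambda>i. M i *\<^sub>v x) I $ r" .
qed (auto simp: lincomb_mat_def)

lemma lincomb_vec_single:
  assumes "finite I" "j \<in> I" and "\<forall>k\<in>I-{j}. u k = 0\<^sub>v n" and "u j \<in> carrier_vec n"
  shows "lincomb_vec n c u I = c j \<cdot>\<^sub>v u j"
proof (rule eq_vecI)
  fix r assume "r < dim_vec (c j \<cdot>\<^sub>v u j)"
  hence r: "r < n" using assms by simp
  have "(\<Sum>i\<in>I. c i * (u i $ r)) = c j * (u j $ r) + (\<Sum>i\<in>I-{j}. c i * (u i $ r))"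
    using assms by (simp add: sum.remove)
  also have "(\<Sum>i\<in>I-{j}. c i * (u i $ r)) = 0"
    using assms r by (intro sum.neutral) auto
  finally show "lincomb_vec n c u I $ r = (c j \<cdot>\<^sub>v u j) $ r" using r assms by simp
qed (use assms in auto)

lemma mult_zero_vec [simp]: "M \<in> carrier_mat m n \<Longrightarrow> M *\<^sub>v 0\<^sub>v n = 0\<^sub>v m"
  by (intro eq_vecI) auto

lemma zero_mult_vec [simp]: "x \<in> carrier_vec n \<Longrightarrow> 0\<^sub>m m n *\<^sub>v x = (0\<^sub>v m :: 'a::semiring_0 vec)"
  by (intro eq_vecI) (auto simp: scalar_prod_def)

lemma zero_smult_vec [simp]: "x \<in> carrier_vec n \<Longrightarrow> (0::'a::semiring_0) \<cdot>\<^sub>v x = 0\<^sub>v n"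
  by (intro eq_vecI) auto

lemma smult_vec_zeroD:
  assumes "a \<cdot>\<^sub>v x = 0\<^sub>v n" "x \<in> carrier_vec n" "x \<noteq> 0\<^sub>v n"
  shows "(a::'a::field) = 0"
proof -
  obtain r where r: "r < n" "x $ r \<noteq> 0"
    using assms(2,3) by (metis carrier_vecD eq_vecI index_zero_vec(1,2))
  have "(a \<cdot>\<^sub>v x) $ r = 0" using assms(1) r by simp
  thus ?thesis using r assms(2) by simp
qed

lemma index_mult_mat_vec_sum:
  "M \<in> carrier_mat m n \<Longrightarrow> x \<in> carrier_vec n \<Longrightarrow> i < m \<Longrightarrow>
    (M *\<^sub>v x) $ i = (\<Sum>r<n. M $$ (i,r) * x $ r)"
  by (auto simp: scalar_prod_def lessThan_atLeast0 intro!: sum.cong)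

lemma index_mult_unit_vec:
  "(M::'a::semiring_1 mat) \<in> carrier_mat m n \<Longrightarrow> i < m \<Longrightarrow> j < n \<Longrightarrow>
    (M *\<^sub>v unit_vec n j) $ i = M $$ (i,j)"
  by simp

lemma mat_eq_zeroI:
  assumes "(M::'a::semiring_1 mat) \<in> carrier_mat m n" and "\<forall>x\<in>carrier_vec n. M *\<^sub>v x = 0\<^sub>v m"
  shows "M = 0\<^sub>m m n"
proof (rule eq_matI)
  fix i j assume "i < dim_row (0\<^sub>m m n :: 'a mat)" "j < dim_col (0\<^sub>m m n :: 'a mat)"
  hence ij: "i < m" "j < n" by auto
  have "M $$ (i,j) = (M *\<^sub>v unit_vec n j) $ i" using index_mult_unit_vec[OF assms(1) ij] ..
  also have "\<dots> = 0" using assms(2) ij by simp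
  finally show "M $$ (i,j) = (0\<^sub>m m n :: 'a mat) $$ (i,j)" using ij by simp
qed (use assms in auto)

section \<open>Tridiagonal matrices\<close>

definition symmetrizer :: "(nat \<Rightarrow> nat \<Rightarrow> 'a::field) \<Rightarrow> nat \<Rightarrow> 'a" where
  "symmetrizer Y = rec_nat 1 (\<lambda>i k. k * Y i (i+1) / Y (i+1) i)"

lemma symmetrizer_0 [simp]: "symmetrizer Y 0 = 1"
  and symmetrizer_Suc [simp]: "symmetrizer Y (Suc i) = symmetrizer Y i * Y i (i+1) / Y (i+1) i"
  by (simp_all add: symmetrizer_def)

lemma symmetrizer_nonzero:
  assumes "\<forall>i<d. Y i (i+1) \<noteq> 0 \<and> Y (i+1) i \<noteq> 0" "i \<le> d"
  shows "symmetrizer Y i \<noteq> 0"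
  using assms(2) by (induction i) (use assms(1) in auto)

lemma symmetrizer_symmetric:
  assumes "\<forall>i\<le>d. \<forall>j\<le>d. (i+1 < j \<or> j+1 < i) \<longrightarrow> Y i j = 0"
    and "\<forall>i<d. Y (i+1) i \<noteq> 0" and "i \<le> d" "j \<le> d"
  shows "symmetrizer Y i * Y i j = symmetrizer Y j * Y j i"
proof -
  consider "i = j" | "j = i+1" | "i = j+1" | "i+1 < j \<or> j+1 < i" by arith
  thus ?thesis
  proof cases
    case 2 thus ?thesis using assms by simp
  next
    case 3 thus ?thesis using assms by simp
  next
    case 4 thus ?thesis using assms by auto
  qed simp
qed

lemma hessenberg_solution_eq_zero:
  fixes Y :: "nat \<Rightarrow> nat \<Rightarrow> 'a::field"
  assumes upper: "\<forall>i<d. \<forall>j\<le>d. i+1 < j \<longrightarrow> Y i j = 0"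
    and super: "\<forall>i<d. Y i (i+1) \<noteq> 0"
    and rows: "\<forall>i<d. (\<Sum>j\<le>d. Y i j * \<xi> j) = \<theta> * \<xi> i"
    and "\<xi> 0 = 0"
  shows "\<forall>i\<le>d. \<xi> i = 0"
proof -
  have "\<forall>j\<le>i. \<xi> j = 0" if "i \<le> d" for i
    using that
  proof (induction i)
    case 0 thus ?case using \<open>\<xi> 0 = 0\<close> by simp
  next
    case (Suc i)
    hence IH: "\<forall>j\<le>i. \<xi> j = 0" and i: "i < d" by auto
    have "(\<Sum>j\<le>d. Y i j * \<xi> j) = (\<Sum>j\<le>d. if j = i+1 then Y i j * \<xi> j else 0)"
    proof (intro sum.cong refl)
      fix j assume "j \<in> {..d}"
      thus "Y i j * \<xi> j = (if j = i+1 then Y i j * \<xi> j else 0)"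
        using IH upper i by (cases "j \<le> i") auto
    qed
    also have "\<dots> = Y i (i+1) * \<xi> (i+1)" using i by (simp add: sum.delta')
    finally have "Y i (i+1) * \<xi> (i+1) = 0" using rows IH i by auto
    hence "\<xi> (Suc i) = 0" using super i by simp
    thus ?case using IH le_Suc_eq by blast
  qed
  thus ?thesis by blast
qed

lemma hessenberg_solution_unique:
  fixes Y :: "nat \<Rightarrow> nat \<Rightarrow> 'a::field"
  assumes upper: "\<forall>i<d. \<forall>j\<le>d. i+1 < j \<longrightarrow> Y i j = 0"
    and super: "\<forall>i<d. Y i (i+1) \<noteq> 0"
    and rows_\<xi>: "\<forall>i<d. (\<Sum>j\<le>d. Y i j * \<xi> j) = \<theta> * \<xi> i"
    and rows_\<eta>: "\<forall>i<d. (\<Sum>j\<le>d. Y i j * \<eta> j) = \<theta> * \<eta> i"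
    and "\<xi> 0 = \<eta> 0"
  shows "\<forall>i\<le>d. \<xi> i = \<eta> i"
proof -
  have "(\<Sum>j\<le>d. Y i j * (\<xi> j - \<eta> j)) = \<theta> * (\<xi> i - \<eta> i)" if "i < d" for i
    using rows_\<xi> rows_\<eta> that by (simp add: right_diff_distrib sum_subtractf)
  hence "\<forall>i\<le>d. \<xi> i - \<eta> i = 0"
    using \<open>\<xi> 0 = \<eta> 0\<close> by (intro hessenberg_solution_eq_zero[OF upper super]) auto
  thus ?thesis by simp
qed

lemma tridiagonal_row_solve:
  fixes b c :: "'a::field"
  assumes eq0: "c * am + b * ap = t0 * a"
    and eq1: "c * (sm * am) + b * (sp * ap) = t1 * (s * a) + (t0 * s1 - t1 * s0) * a"
    and "sp \<noteq> sm" "ap \<noteq> 0" "am \<noteq> 0"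
  shows "b = (t1 * (s - s0) - t0 * (sm - s1)) / (sp - sm) * (a / ap)"
    and "c = (t0 * (sp - s1) - t1 * (s - s0)) / (sp - sm) * (a / am)"
proof -
  have "b * ap * (sp - sm) = (t1 * (s - s0) - t0 * (sm - s1)) * a"
    using arg_cong2[OF eq1 arg_cong[OF eq0, of "\<lambda>x. sm * x"], of "(-)"]
    by (simp add: algebra_simps)
  thus "b = (t1 * (s - s0) - t0 * (sm - s1)) / (sp - sm) * (a / ap)"
    using assms(3,4) by (simp add: field_simps)
  have "c * am * (sp - sm) = (t0 * (sp - s1) - t1 * (s - s0)) * a"
    using arg_cong2[OF arg_cong[OF eq0, of "\<lambda>x. sp * x"] eq1, of "(-)"]
    by (simp add: algebra_simps)
  thus "c = (t0 * (sp - s1) - t1 * (s - s0)) / (sp - sm) * (a / am)"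
    using assms(3,5) by (simp add: field_simps)
qed

section \<open>Coordinates with respect to an adapted basis\<close>

locale adapted_frame =
  fixes d :: nat and Es :: "nat \<Rightarrow> 'a::field mat" and v :: "nat \<Rightarrow> 'a vec"
  assumes Es_carrier: "\<forall>i\<le>d. Es i \<in> carrier_mat (d+1) (d+1)"
    and Es_orth: "\<forall>i\<le>d. \<forall>j\<le>d. Es i * Es j = (if i = j then Es i else 0\<^sub>m (d+1) (d+1))"
    and v_adapted: "adapted_basis d Es v"
begin

text \<open>The simplifier rewrites \<open>d+1\<close> to \<open>Suc d\<close>, so derived facts are stated with \<open>Suc d\<close>.\<close>

lemma Es_carrier' [simp]: "i \<le> d \<Longrightarrow> Es i \<in> carrier_mat (Suc d) (Suc d)"
  using Es_carrier by simp

lemma Es_mult_vec_carrier [simp]: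
  "i \<le> d \<Longrightarrow> x \<in> carrier_vec (Suc d) \<Longrightarrow> Es i *\<^sub>v x \<in> carrier_vec (Suc d)"
  by (rule mult_mat_vec_carrier[OF Es_carrier'])

lemma v_carrier [simp]: "i \<le> d \<Longrightarrow> v i \<in> carrier_vec (Suc d)"
  and dim_v [simp]: "i \<le> d \<Longrightarrow> dim_vec (v i) = Suc d"
  and v_nonzero: "i \<le> d \<Longrightarrow> v i \<noteq> 0\<^sub>v (Suc d)"
  using v_adapted by (auto simp: adapted_basis_def)

lemma Es_mult_adapted:
  assumes "adapted_basis d Es u" "i \<le> d" "k \<le> d"
  shows "Es i *\<^sub>v u k = (if i = k then u k else 0\<^sub>v (Suc d))"
proof -
  obtain w where w: "w \<in> carrier_vec (Suc d)" "u k = Es k *\<^sub>v w"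
    using assms(1,3) Es_carrier'[OF assms(3)] unfolding adapted_basis_def in_image_def
    by (metis carrier_matD(2))
  have "Es i *\<^sub>v u k = (Es i * Es k) *\<^sub>v w"
    using w assoc_mult_mat_vec[OF Es_carrier'[OF assms(2)] Es_carrier'[OF assms(3)] w(1)] by simp
  thus ?thesis using Es_orth assms w by auto
qed

lemma Es_mult_lincomb_adapted:
  assumes "adapted_basis d Es u" "i \<le> d"
  shows "Es i *\<^sub>v lincomb_vec (Suc d) c u {..d} = c i \<cdot>\<^sub>v u i"
proof -
  have u: "\<forall>k\<in>{..d}. u k \<in> carrier_vec (Suc d)" using assms(1) by (auto simp: adapted_basis_def)
  have "Es i *\<^sub>v lincomb_vec (Suc d) c u {..d} = lincomb_vec (Suc d) c (\<lambda>k. Es i *\<^sub>v u k) {..d}"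
    using assms(2) u by (intro mult_mat_lincomb_vec) auto
  also have "\<dots> = c i \<cdot>\<^sub>v (Es i *\<^sub>v u i)"
    using assms Es_mult_adapted u by (intro lincomb_vec_single) auto
  finally show ?thesis using Es_mult_adapted assms by simp
qed

definition basis_mat :: "'a mat" where
  "basis_mat = mat (Suc d) (Suc d) (\<lambda>(r,i). v i $ r)"

lemma basis_mat_carrier [simp]: "basis_mat \<in> carrier_mat (Suc d) (Suc d)"
  by (simp add: basis_mat_def)

lemma basis_mat_mult_vec:
  assumes "\<xi> \<in> carrier_vec (Suc d)"
  shows "basis_mat *\<^sub>v \<xi> = lincomb_vec (Suc d) (\<lambda>i. \<xi> $ i) v {..d}"
proof (rule eq_vecI)
  fix r assume "r < dim_vec (lincomb_vec (Suc d) (\<lambda>i. \<xi> $ i) v {..d})"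
  hence r: "r < Suc d" by simp
  have "(basis_mat *\<^sub>v \<xi>) $ r = (\<Sum>i<Suc d. v i $ r * \<xi> $ i)"
    using r assms by (simp add: basis_mat_def scalar_prod_def lessThan_atLeast0)
  also have "\<dots> = (\<Sum>i\<le>d. \<xi> $ i * v i $ r)"
    by (simp add: lessThan_Suc_atMost mult.commute)
  finally show "(basis_mat *\<^sub>v \<xi>) $ r = lincomb_vec (Suc d) (\<lambda>i. \<xi> $ i) v {..d} $ r"
    using r by simp
qed (simp add: basis_mat_def)

lemma basis_mat_mult_unit_vec: "k \<le> d \<Longrightarrow> basis_mat *\<^sub>v unit_vec (Suc d) k = v k"
  using v_carrier[of k] by (intro eq_vecI) (auto simp: basis_mat_def)

lemma det_basis_mat_nonzero: "det basis_mat \<noteq> 0"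
proof -
  have "\<xi> = 0\<^sub>v (Suc d)" if "\<xi> \<in> carrier_vec (Suc d)" "basis_mat *\<^sub>v \<xi> = 0\<^sub>v (Suc d)" for \<xi>
  proof (rule eq_vecI)
    fix i assume "i < dim_vec (0\<^sub>v (Suc d) :: 'a vec)"
    hence i: "i \<le> d" by simp
    have "\<xi> $ i \<cdot>\<^sub>v v i = Es i *\<^sub>v (basis_mat *\<^sub>v \<xi>)"
      using basis_mat_mult_vec[OF that(1)] Es_mult_lincomb_adapted[OF v_adapted i] by simp
    also have "\<dots> = 0\<^sub>v (Suc d)" using that(2) i by simp
    finally have "\<xi> $ i = 0" using smult_vec_zeroD[OF _ v_carrier v_nonzero] i by blast
    thus "\<xi> $ i = 0\<^sub>v (Suc d) $ i" using i by simp
  qed (use that in auto)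
  thus ?thesis using det_0_iff_vec_prod_zero[OF basis_mat_carrier] by blast
qed

definition coord_mat :: "'a mat" where
  "coord_mat = (1 / det basis_mat) \<cdot>\<^sub>m adj_mat basis_mat"

lemma coord_mat_carrier [simp]: "coord_mat \<in> carrier_mat (Suc d) (Suc d)"
  using adj_mat(1)[OF basis_mat_carrier] by (simp add: coord_mat_def)

lemma coord_mat_basis_mat: "coord_mat * basis_mat = 1\<^sub>m (Suc d)"
  unfolding coord_mat_def mult_smult_assoc_mat[OF adj_mat(1) basis_mat_carrier, OF basis_mat_carrier]
    adj_mat(3)[OF basis_mat_carrier]
  using det_basis_mat_nonzero by (intro eq_matI) auto

lemma basis_mat_coord_mat: "basis_mat * coord_mat = 1\<^sub>m (Suc d)"
  unfolding coord_mat_def mult_smult_distrib[OF basis_mat_carrier adj_mat(1), OF basis_mat_carrier]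
    adj_mat(2)[OF basis_mat_carrier]
  using det_basis_mat_nonzero by (intro eq_matI) auto

definition coord :: "'a vec \<Rightarrow> nat \<Rightarrow> 'a" where
  "coord x i = (coord_mat *\<^sub>v x) $ i"

lemma lincomb_coord:
  assumes "x \<in> carrier_vec (Suc d)"
  shows "lincomb_vec (Suc d) (coord x) v {..d} = x"
proof -
  have "lincomb_vec (Suc d) (coord x) v {..d} = basis_mat *\<^sub>v (coord_mat *\<^sub>v x)"
    using basis_mat_mult_vec[OF mult_mat_vec_carrier[OF coord_mat_carrier]] assms
    by (simp add: coord_def[abs_def])
  also have "\<dots> = (basis_mat * coord_mat) *\<^sub>v x"
    using assms by (simp add: assoc_mult_mat_vec[OF basis_mat_carrier coord_mat_carrier])
  finally show ?thesis using basis_mat_coord_mat assms by simp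
qed

lemma coord_basis:
  assumes "k \<le> d" "i \<le> d"
  shows "coord (v k) i = (if i = k then 1 else 0)"
proof -
  have "coord_mat *\<^sub>v v k = coord_mat *\<^sub>v (basis_mat *\<^sub>v unit_vec (Suc d) k)"
    using assms(1) by (simp only: basis_mat_mult_unit_vec)
  also have "\<dots> = (coord_mat * basis_mat) *\<^sub>v unit_vec (Suc d) k"
    by (simp add: assoc_mult_mat_vec[OF coord_mat_carrier basis_mat_carrier])
  finally have "coord_mat *\<^sub>v v k = (coord_mat * basis_mat) *\<^sub>v unit_vec (Suc d) k" .
  thus ?thesis using assms by (simp add: coord_def coord_mat_basis_mat)
qed

lemma coord_add: "x \<in> carrier_vec (Suc d) \<Longrightarrow> y \<in> carrier_vec (Suc d) \<Longrightarrow> i \<le> d \<Longrightarrow>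
    coord (x + y) i = coord x i + coord y i"
  by (simp add: coord_def mult_add_distrib_mat_vec[OF coord_mat_carrier] carrier_matD[OF coord_mat_carrier])

lemma coord_diff: "x \<in> carrier_vec (Suc d) \<Longrightarrow> y \<in> carrier_vec (Suc d) \<Longrightarrow> i \<le> d \<Longrightarrow>
    coord (x - y) i = coord x i - coord y i"
  by (simp add: coord_def mult_minus_distrib_mat_vec[OF coord_mat_carrier] carrier_matD[OF coord_mat_carrier])

lemma coord_smult: "x \<in> carrier_vec (Suc d) \<Longrightarrow> i \<le> d \<Longrightarrow> coord (a \<cdot>\<^sub>v x) i = a * coord x i"
  by (simp add: coord_def mult_mat_vec[OF coord_mat_carrier] carrier_matD[OF coord_mat_carrier])

lemma coord_zero: "i \<le> d \<Longrightarrow> coord (0\<^sub>v (Suc d)) i = 0"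
  by (simp add: coord_def mult_zero_vec[OF coord_mat_carrier])

lemma coord_lincomb:
  assumes "\<forall>k\<in>S. w k \<in> carrier_vec (Suc d)" "i \<le> d"
  shows "coord (lincomb_vec (Suc d) c w S) i = (\<Sum>k\<in>S. c k * coord (w k) i)"
  using assms by (simp add: coord_def mult_mat_lincomb_vec[OF coord_mat_carrier assms(1)])

lemma coord_lincomb_basis: "i \<le> d \<Longrightarrow> coord (lincomb_vec (Suc d) c v {..d}) i = c i"
  by (simp add: coord_lincomb coord_basis if_distrib sum.delta' cong: if_cong)

lemma coord_eqI:
  assumes "x \<in> carrier_vec (Suc d)" "y \<in> carrier_vec (Suc d)" "\<forall>i\<le>d. coord x i = coord y i"
  shows "x = y"
proof -
  have "lincomb_vec (Suc d) (coord x) v {..d} = lincomb_vec (Suc d) (coord y) v {..d}"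
    using assms(3) by (intro eq_vecI) auto
  thus ?thesis using lincomb_coord assms by metis
qed

lemma coord_eq_zero_iff:
  "x \<in> carrier_vec (Suc d) \<Longrightarrow> x = 0\<^sub>v (Suc d) \<longleftrightarrow> (\<forall>i\<le>d. coord x i = 0)"
  using coord_eqI[of x "0\<^sub>v (Suc d)"] coord_zero by auto

lemma Es_mult_vec: "x \<in> carrier_vec (Suc d) \<Longrightarrow> i \<le> d \<Longrightarrow> Es i *\<^sub>v x = coord x i \<cdot>\<^sub>v v i"
  using lincomb_coord Es_mult_lincomb_adapted[OF v_adapted] by metis

lemma coord_lincomb_mat_Es:
  assumes "x \<in> carrier_vec (Suc d)" "i \<le> d"
  shows "coord (lincomb_mat (Suc d) c Es {..d} *\<^sub>v x) i = c i * coord x i"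
proof -
  have "lincomb_mat (Suc d) c Es {..d} *\<^sub>v x = lincomb_vec (Suc d) (\<lambda>k. c k * coord x k) v {..d}"
    using assms Es_mult_vec by (auto simp: lincomb_mat_mult_vec mult.assoc intro!: eq_vecI)
  thus ?thesis using assms(2) by (simp add: coord_lincomb_basis)
qed

lemma mat_trace_Es_mult:
  assumes B: "B \<in> carrier_mat (Suc d) (Suc d)" and i: "i \<le> d"
  shows "mat_trace (Es i * B) = coord (B *\<^sub>v v i) i"
proof -
  let ?C = "coord_mat * B"
  have C: "?C \<in> carrier_mat (Suc d) (Suc d)" by (rule mult_carrier_mat[OF coord_mat_carrier B])
  have EB: "Es i * B \<in> carrier_mat (Suc d) (Suc d)" by (rule mult_carrier_mat[OF Es_carrier'[OF i] B])
  have coord_B: "coord (B *\<^sub>v x) i = (?C *\<^sub>v x) $ i" if "x \<in> carrier_vec (Suc d)" for x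
    using that B by (simp add: coord_def assoc_mult_mat_vec[OF coord_mat_carrier B])
  have "mat_trace (Es i * B) = (\<Sum>r<Suc d. (Es i * B) $$ (r,r))"
    using i by (simp add: mat_trace_def carrier_matD[OF Es_carrier'] del: sum.lessThan_Suc)
  also have "\<dots> = (\<Sum>r<Suc d. ?C $$ (i,r) * v i $ r)"
  proof (rule sum.cong[OF refl])
    fix r assume "r \<in> {..<Suc d}"
    hence r: "r < Suc d" by simp
    have "(Es i * B) $$ (r,r) = ((Es i * B) *\<^sub>v unit_vec (Suc d) r) $ r"
      using index_mult_unit_vec[OF EB r r] ..
    also have "\<dots> = (Es i *\<^sub>v (B *\<^sub>v unit_vec (Suc d) r)) $ r"
      using B i by (simp add: assoc_mult_mat_vec[OF Es_carrier' B])
    also have "\<dots> = coord (B *\<^sub>v unit_vec (Suc d) r) i * v i $ r"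
      using B i r by (simp add: Es_mult_vec)
    also have "coord (B *\<^sub>v unit_vec (Suc d) r) i = ?C $$ (i,r)"
      using i r by (simp add: coord_B index_mult_unit_vec[OF C])
    finally show "(Es i * B) $$ (r,r) = ?C $$ (i,r) * v i $ r" .
  qed
  also have "\<dots> = (?C *\<^sub>v v i) $ i"
    using i by (simp add: index_mult_mat_vec_sum[OF C])
  also have "\<dots> = coord (B *\<^sub>v v i) i"
    using i by (simp add: coord_B)
  finally show ?thesis .
qed

end

section \<open>The tridiagonal matrix of A and an invariant bilinear form\<close>

locale tridiagonal_frame = adapted_frame d Es v
  for d :: nat and Es :: "nat \<Rightarrow> 'a::field mat" and v +
  fixes A :: "'a mat" and Y :: "nat \<Rightarrow> nat \<Rightarrow> 'a"
  assumes A_carrier: "A \<in> carrier_mat (d+1) (d+1)"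
    and Es_A_Es_far: "\<forall>i\<le>d. \<forall>j\<le>d. (i+1 < j \<or> j+1 < i) \<longrightarrow> Es i * A * Es j = 0\<^sub>m (d+1) (d+1)"
    and Es_A_Es_adjacent: "\<forall>i\<le>d. \<forall>j\<le>d. (i = j+1 \<or> j = i+1) \<longrightarrow> Es i * A * Es j \<noteq> 0\<^sub>m (d+1) (d+1)"
    and bipartite: "\<forall>i\<le>d. mat_trace (Es i * A) = 0"
    and Y_represents: "represents d A v Y"
begin

lemma A_carrier' [simp]: "A \<in> carrier_mat (Suc d) (Suc d)"
  using A_carrier by simp

lemma A_mult_vec_carrier [simp]: "x \<in> carrier_vec (Suc d) \<Longrightarrow> A *\<^sub>v x \<in> carrier_vec (Suc d)"
  by (rule mult_mat_vec_carrier[OF A_carrier'])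

lemma coord_A_v: "i \<le> d \<Longrightarrow> j \<le> d \<Longrightarrow> coord (A *\<^sub>v v j) i = Y i j"
  using Y_represents by (simp add: represents_def coord_lincomb_basis)

lemma coord_A:
  assumes "x \<in> carrier_vec (Suc d)" "i \<le> d"
  shows "coord (A *\<^sub>v x) i = (\<Sum>j\<le>d. Y i j * coord x j)"
proof -
  have "A *\<^sub>v x = A *\<^sub>v lincomb_vec (Suc d) (coord x) v {..d}"
    using lincomb_coord[OF assms(1)] by simp
  also have "\<dots> = lincomb_vec (Suc d) (coord x) (\<lambda>j. A *\<^sub>v v j) {..d}"
    by (intro mult_mat_lincomb_vec) auto
  finally show ?thesis
    using assms(2) by (simp add: coord_lincomb coord_A_v mult.commute)
qed

lemma Es_A_v: "i \<le> d \<Longrightarrow> j \<le> d \<Longrightarrow> Es i *\<^sub>v (A *\<^sub>v v j) = Y i j \<cdot>\<^sub>v v i"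
  using Es_mult_vec[of "A *\<^sub>v v j" i] coord_A_v by simp

lemma Es_A_Es_carrier [simp]: "i \<le> d \<Longrightarrow> j \<le> d \<Longrightarrow> Es i * A * Es j \<in> carrier_mat (Suc d) (Suc d)"
  by (metis A_carrier' Es_carrier' mult_carrier_mat)

lemma Es_A_Es_mult_vec:
  assumes "i \<le> d" "j \<le> d" "x \<in> carrier_vec (Suc d)"
  shows "(Es i * A * Es j) *\<^sub>v x = (Y i j * coord x j) \<cdot>\<^sub>v v i"
proof -
  have "(Es i * A * Es j) *\<^sub>v x = Es i *\<^sub>v (A *\<^sub>v (coord x j \<cdot>\<^sub>v v j))"
    using assms Es_mult_vec[OF assms(3,2)]
    by (simp add: assoc_mult_mat_vec[OF mult_carrier_mat[OF Es_carrier' A_carrier'] Es_carrier']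
        assoc_mult_mat_vec[OF Es_carrier' A_carrier'])
  also have "\<dots> = coord x j \<cdot>\<^sub>v (Es i *\<^sub>v (A *\<^sub>v v j))"
    using assms by (simp add: mult_mat_vec[OF A_carrier'] mult_mat_vec[OF Es_carrier'])
  finally show ?thesis using assms Es_A_v by (simp add: smult_smult_assoc mult.commute)
qed

lemma Y_far_zero: "i \<le> d \<Longrightarrow> j \<le> d \<Longrightarrow> i+1 < j \<or> j+1 < i \<Longrightarrow> Y i j = 0"
  using Es_A_Es_mult_vec[of i j "v j"] Es_A_Es_far coord_basis[of j j]
    smult_vec_zeroD[OF _ v_carrier v_nonzero] by auto

lemma Y_adjacent_nonzero: "i \<le> d \<Longrightarrow> j \<le> d \<Longrightarrow> i = j+1 \<or> j = i+1 \<Longrightarrow> Y i j \<noteq> 0"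
proof
  assume asm: "i \<le> d" "j \<le> d" "i = j+1 \<or> j = i+1" "Y i j = 0"
  have "Es i * A * Es j = 0\<^sub>m (Suc d) (Suc d)"
    using asm Es_A_Es_mult_vec[of i j] by (intro mat_eq_zeroI) auto
  thus False using asm Es_A_Es_adjacent by auto
qed

lemma Y_diag_zero: "i \<le> d \<Longrightarrow> Y i i = 0"
  using bipartite mat_trace_Es_mult[OF A_carrier'] coord_A_v by simp

lemma Y_upper: "\<forall>i<d. \<forall>j\<le>d. i+1 < j \<longrightarrow> Y i j = 0"
  and Y_super: "\<forall>i<d. Y i (i+1) \<noteq> 0"
  and Y_sub: "\<forall>i<d. Y (i+1) i \<noteq> 0"
  using Y_far_zero Y_adjacent_nonzero by auto

text \<open>For \<open>i = 0\<close> the first summand is \<open>Y 0 0 * f 0 = 0\<close> (truncated subtraction).\<close>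

lemma row_sum_tridiagonal:
  assumes "i < d"
  shows "(\<Sum>j\<le>d. Y i j * f j) = Y i (i-1) * f (i-1) + Y i (i+1) * f (i+1)"
proof -
  have "Y i j * f j = (if j = i-1 then Y i j * f j else 0) + (if j = i+1 then Y i j * f j else 0)"
    if "j \<le> d" for j
  proof -
    consider "j = i-1" | "j = i+1" | "j = i" | "i+1 < j \<or> j+1 < i" by arith
    thus ?thesis
      using Y_diag_zero[of i] Y_far_zero[of i j] assms that by cases auto
  qed
  hence "(\<Sum>j\<le>d. Y i j * f j) =
      (\<Sum>j\<le>d. (if j = i-1 then Y i j * f j else 0) + (if j = i+1 then Y i j * f j else 0))"
    by (intro sum.cong) auto
  also have "\<dots> =
      (\<Sum>j\<le>d. if j = i-1 then Y i j * f j else 0) + (\<Sum>j\<le>d. if j = i+1 then Y i j * f j else 0)"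
    by (rule sum.distrib)
  finally show ?thesis using assms by (simp add: sum.delta')
qed

lemma eigvec_coord_rows:
  assumes "x \<in> carrier_vec (Suc d)" "A *\<^sub>v x = \<theta> \<cdot>\<^sub>v x" "i \<le> d"
  shows "(\<Sum>j\<le>d. Y i j * coord x j) = \<theta> * coord x i"
  using coord_A[OF assms(1,3)] coord_smult[OF assms(1,3)] assms(2) by simp

lemma eigvec_coord_0_nonzero:
  assumes "y \<in> carrier_vec (Suc d)" "y \<noteq> 0\<^sub>v (Suc d)" "A *\<^sub>v y = \<theta> \<cdot>\<^sub>v y"
  shows "coord y 0 \<noteq> 0"
  using hessenberg_solution_eq_zero[OF Y_upper Y_super, of "coord y" \<theta>]
    eigvec_coord_rows[OF assms(1,3)] coord_eq_zero_iff assms(1,2) by auto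

lemma eigvec_eq_smult:
  assumes x: "x \<in> carrier_vec (Suc d)" "A *\<^sub>v x = \<theta> \<cdot>\<^sub>v x"
    and y: "y \<in> carrier_vec (Suc d)" "y \<noteq> 0\<^sub>v (Suc d)" "A *\<^sub>v y = \<theta> \<cdot>\<^sub>v y"
  shows "x = (coord x 0 / coord y 0) \<cdot>\<^sub>v y"
proof -
  define c where "c = coord x 0 / coord y 0"
  have rows_cy: "(\<Sum>j\<le>d. Y i j * (c * coord y j)) = \<theta> * (c * coord y i)" if "i \<le> d" for i
  proof -
    have "(\<Sum>j\<le>d. Y i j * (c * coord y j)) = c * (\<Sum>j\<le>d. Y i j * coord y j)"
      by (simp add: sum_distrib_left mult.left_commute)
    thus ?thesis using eigvec_coord_rows[OF y(1,3) that] by simp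
  qed
  have "coord x 0 = c * coord y 0"
    using eigvec_coord_0_nonzero[OF y] by (simp add: c_def)
  hence "\<forall>i\<le>d. coord x i = c * coord y i"
    using eigvec_coord_rows[OF x] rows_cy
    by (intro hessenberg_solution_unique[OF Y_upper Y_super, where \<theta> = \<theta>]) auto
  hence "\<forall>i\<le>d. coord x i = coord (c \<cdot>\<^sub>v y) i"
    using y(1) by (simp add: coord_smult)
  thus ?thesis
    unfolding c_def[symmetric] using x(1) y(1) by (intro coord_eqI) simp_all
qed

lemma normalizing_eigvec:
  assumes "normalizing d A Es \<theta>"
  obtains w where "w \<in> carrier_vec (Suc d)" "A *\<^sub>v w = \<theta> \<cdot>\<^sub>v w" "\<forall>i\<le>d. coord w i \<noteq> 0"
proof -
  obtain u Y' where u: "adapted_basis d Es u" and Y': "represents d A u Y'"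
    and row_sums: "\<forall>i\<le>d. (\<Sum>j\<le>d. Y' i j) = \<theta>"
    using assms unfolding normalizing_def by blast
  have u_carrier: "\<forall>j\<in>{..d}. u j \<in> carrier_vec (Suc d)"
    using u by (auto simp: adapted_basis_def)
  define w where "w = lincomb_vec (Suc d) (\<lambda>_. 1) u {..d}"
  have "A *\<^sub>v w = lincomb_vec (Suc d) (\<lambda>_. 1) (\<lambda>j. A *\<^sub>v u j) {..d}"
    unfolding w_def using u_carrier by (intro mult_mat_lincomb_vec) auto
  also have "\<dots> = \<theta> \<cdot>\<^sub>v w"
  proof (rule eq_vecI)
    fix r assume "r < dim_vec (\<theta> \<cdot>\<^sub>v w)"
    hence r: "r < Suc d" by (simp add: w_def)
    have "lincomb_vec (Suc d) (\<lambda>_. 1) (\<lambda>j. A *\<^sub>v u j) {..d} $ r = (\<Sum>j\<le>d. \<Sum>i\<le>d. Y' i j * u i $ r)"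
      using r Y' by (simp add: represents_def)
    also have "\<dots> = (\<Sum>i\<le>d. (\<Sum>j\<le>d. Y' i j) * u i $ r)"
      by (subst sum.swap) (simp add: sum_distrib_right)
    also have "\<dots> = (\<theta> \<cdot>\<^sub>v w) $ r"
      using row_sums r by (simp add: w_def sum_distrib_left)
    finally show "lincomb_vec (Suc d) (\<lambda>_. 1) (\<lambda>j. A *\<^sub>v u j) {..d} $ r = (\<theta> \<cdot>\<^sub>v w) $ r" .
  qed (simp add: w_def)
  finally have "A *\<^sub>v w = \<theta> \<cdot>\<^sub>v w" .
  moreover have "coord w i \<noteq> 0" if i: "i \<le> d" for i
  proof
    assume "coord w i = 0"
    hence "Es i *\<^sub>v w = 0\<^sub>v (Suc d)" using Es_mult_vec[of w i] i by (simp add: w_def)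
    moreover have "Es i *\<^sub>v w = u i"
      using Es_mult_lincomb_adapted[OF u i] u_carrier i by (simp add: w_def)
    ultimately show False using u i by (auto simp: adapted_basis_def)
  qed
  ultimately show ?thesis using that[of w] by (simp add: w_def)
qed

lemma cosine_eigvec:
  assumes "normalizing d A Es \<theta>"
    and rows: "\<forall>i<d. (\<Sum>j\<le>d. Y i j * \<alpha> j) = \<theta> * \<alpha> i" and "\<alpha> 0 = 1"
  obtains u where "u \<in> carrier_vec (Suc d)" "A *\<^sub>v u = \<theta> \<cdot>\<^sub>v u"
    "\<forall>i\<le>d. coord u i = \<alpha> i" "\<forall>i\<le>d. \<alpha> i \<noteq> 0"
proof -
  obtain w where w: "w \<in> carrier_vec (Suc d)" "A *\<^sub>v w = \<theta> \<cdot>\<^sub>v w" "\<forall>i\<le>d. coord w i \<noteq> 0"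
    using normalizing_eigvec[OF assms(1)] by blast
  define \<mu> where "\<mu> = coord w 0"
  have \<mu>: "\<mu> \<noteq> 0" using w(3) by (simp add: \<mu>_def)
  have "(\<Sum>j\<le>d. Y i j * (\<mu> * \<alpha> j)) = \<theta> * (\<mu> * \<alpha> i)" if "i < d" for i
  proof -
    have "(\<Sum>j\<le>d. Y i j * (\<mu> * \<alpha> j)) = \<mu> * (\<Sum>j\<le>d. Y i j * \<alpha> j)"
      by (simp add: sum_distrib_left mult.left_commute)
    thus ?thesis using rows that by simp
  qed
  hence coord_w: "\<forall>i\<le>d. coord w i = \<mu> * \<alpha> i"
    using eigvec_coord_rows[OF w(1,2)] \<open>\<alpha> 0 = 1\<close>
    by (intro hessenberg_solution_unique[OF Y_upper Y_super, where \<theta> = \<theta>]) (auto simp: \<mu>_def)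
  define u where "u = (1 / \<mu>) \<cdot>\<^sub>v w"
  have "u \<in> carrier_vec (Suc d)" using w(1) by (simp add: u_def)
  moreover have "A *\<^sub>v u = \<theta> \<cdot>\<^sub>v u"
    using w(1,2) by (simp add: u_def mult_mat_vec[OF A_carrier'] smult_smult_assoc mult.commute)
  moreover have "\<forall>i\<le>d. coord u i = \<alpha> i"
    using coord_w \<mu> w(1) by (simp add: u_def coord_smult)
  moreover have "\<forall>i\<le>d. \<alpha> i \<noteq> 0"
    using coord_w w(3) by fastforce
  ultimately show ?thesis using that by blast
qed

definition form :: "'a vec \<Rightarrow> 'a vec \<Rightarrow> 'a" where
  "form x y = (\<Sum>i\<le>d. symmetrizer Y i * coord x i * coord y i)"

lemma form_sym: "form x y = form y x"
  unfolding form_def by (intro sum.cong) (auto simp: mult_ac)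

lemma form_smult_right: "y \<in> carrier_vec (Suc d) \<Longrightarrow> form x (a \<cdot>\<^sub>v y) = a * form x y"
  unfolding form_def by (simp add: coord_smult sum_distrib_left mult_ac)

lemma form_diff_right:
  "y \<in> carrier_vec (Suc d) \<Longrightarrow> z \<in> carrier_vec (Suc d) \<Longrightarrow> form x (y - z) = form x y - form x z"
  unfolding form_def by (simp add: coord_diff right_diff_distrib sum_subtractf)

lemma form_lincomb_right:
  assumes "\<forall>m\<in>S. w m \<in> carrier_vec (Suc d)"
  shows "form x (lincomb_vec (Suc d) c w S) = (\<Sum>m\<in>S. c m * form x (w m))"
proof -
  have "form x (lincomb_vec (Suc d) c w S) = (\<Sum>i\<le>d. \<Sum>m\<in>S. c m * (symmetrizer Y i * coord x i * coord (w m) i))"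
    unfolding form_def using assms by (simp add: coord_lincomb sum_distrib_left mult_ac)
  also have "\<dots> = (\<Sum>m\<in>S. c m * form x (w m))"
    unfolding form_def by (subst sum.swap) (simp add: sum_distrib_left)
  finally show ?thesis .
qed

lemma form_A_adjoint:
  assumes "x \<in> carrier_vec (Suc d)" "y \<in> carrier_vec (Suc d)"
  shows "form (A *\<^sub>v x) y = form x (A *\<^sub>v y)"
proof -
  have sym: "symmetrizer Y i * Y i j = symmetrizer Y j * Y j i" if "i \<le> d" "j \<le> d" for i j
    using symmetrizer_symmetric[of d Y] Y_far_zero Y_sub that by blast
  have "form (A *\<^sub>v x) y = (\<Sum>i\<le>d. \<Sum>j\<le>d. (symmetrizer Y i * Y i j) * coord x j * coord y i)"
    unfolding form_def using assms by (simp add: coord_A sum_distrib_right sum_distrib_left mult_ac)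
  also have "\<dots> = (\<Sum>i\<le>d. \<Sum>j\<le>d. (symmetrizer Y j * Y j i) * coord x j * coord y i)"
    using sym by (intro sum.cong refl) auto
  also have "\<dots> = form x (A *\<^sub>v y)"
    unfolding form_def using assms
    by (subst sum.swap) (simp add: coord_A sum_distrib_right sum_distrib_left mult_ac)
  finally show ?thesis .
qed

lemma form_lincomb_mat_Es_adjoint:
  assumes "x \<in> carrier_vec (Suc d)" "y \<in> carrier_vec (Suc d)"
  shows "form (lincomb_mat (Suc d) c Es {..d} *\<^sub>v x) y = form x (lincomb_mat (Suc d) c Es {..d} *\<^sub>v y)"
  unfolding form_def using assms by (intro sum.cong) (auto simp: coord_lincomb_mat_Es mult_ac)

lemma form_nondegenerate:
  assumes "x \<in> carrier_vec (Suc d)" "x \<noteq> 0\<^sub>v (Suc d)"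
  obtains t where "t \<in> carrier_vec (Suc d)" "form x t \<noteq> 0"
proof -
  obtain i where i: "i \<le> d" "coord x i \<noteq> 0" using assms coord_eq_zero_iff by blast
  have "form x (v i) = symmetrizer Y i * coord x i"
    unfolding form_def using i(1) by (simp add: coord_basis if_distrib sum.delta' cong: if_cong)
  moreover have "symmetrizer Y i \<noteq> 0"
    using symmetrizer_nonzero[of d Y i] Y_super Y_sub i(1) by blast
  ultimately show ?thesis using that[of "v i"] i by simp
qed

lemma form_eigvec_orthogonal:
  assumes "x \<in> carrier_vec (Suc d)" "y \<in> carrier_vec (Suc d)"
    and "A *\<^sub>v x = \<theta> \<cdot>\<^sub>v x" "A *\<^sub>v y = \<theta>' \<cdot>\<^sub>v y" "\<theta> \<noteq> \<theta>'"
  shows "form x y = 0"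
proof -
  have "\<theta> * form x y = \<theta>' * form x y"
    using form_A_adjoint[OF assms(1,2)] assms(3,4) form_smult_right[OF assms(1)]
      form_smult_right[OF assms(2)] form_sym by metis
  thus ?thesis using assms(5) by simp
qed

lemma form_zero_right: "form x (0\<^sub>v (Suc d)) = 0"
  unfolding form_def by (simp add: coord_zero)

end

section \<open>Primitive idempotents\<close>

locale spectral_frame = tridiagonal_frame d Es v A Y
  for d :: nat and Es :: "nat \<Rightarrow> 'a::field mat" and v A Y +
  fixes th :: "nat \<Rightarrow> 'a" and E :: "nat \<Rightarrow> 'a mat"
  assumes th_inj: "inj_on th {..d}"
    and E_projection: "\<forall>i\<le>d. eig_projection d A th i (E i)"
begin

lemma th_neq: "j \<le> d \<Longrightarrow> m \<le> d \<Longrightarrow> j \<noteq> m \<Longrightarrow> th j \<noteq> th m"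
  using th_inj by (auto simp: inj_on_def)

lemma E_carrier [simp]: "j \<le> d \<Longrightarrow> E j \<in> carrier_mat (Suc d) (Suc d)"
  using E_projection by (simp add: eig_projection_def)

lemma E_mult_vec_carrier [simp]:
  "j \<le> d \<Longrightarrow> t \<in> carrier_vec (Suc d) \<Longrightarrow> E j *\<^sub>v t \<in> carrier_vec (Suc d)"
  by (rule mult_mat_vec_carrier[OF E_carrier])

lemma A_E_mult_vec: "j \<le> d \<Longrightarrow> t \<in> carrier_vec (Suc d) \<Longrightarrow> A *\<^sub>v (E j *\<^sub>v t) = th j \<cdot>\<^sub>v (E j *\<^sub>v t)"
  using E_projection by (simp add: eig_projection_def)

lemma E_complement:
  assumes "j \<le> d" "t \<in> carrier_vec (Suc d)"
  obtains w where "\<forall>m\<le>d. m \<noteq> j \<longrightarrow> w m \<in> carrier_vec (Suc d) \<and> A *\<^sub>v w m = th m \<cdot>\<^sub>v w m"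
    and "t - E j *\<^sub>v t = lincomb_vec (Suc d) (\<lambda>_. 1) w ({..d} - {j})"
proof -
  have "eig_projection d A th j (E j)" using E_projection assms(1) by blast
  hence "\<exists>w. (\<forall>m\<le>d. m \<noteq> j \<longrightarrow> w m \<in> carrier_vec (Suc d) \<and> A *\<^sub>v w m = th m \<cdot>\<^sub>v w m) \<and>
      t - E j *\<^sub>v t = lincomb_vec (Suc d) (\<lambda>_. 1) w ({..d} - {j})"
    using assms(2) unfolding eig_projection_def by simp
  thus ?thesis using that by blast
qed

lemma form_E_right:
  assumes j: "j \<le> d" and y: "y \<in> carrier_vec (Suc d)" "A *\<^sub>v y = th j \<cdot>\<^sub>v y"
    and t: "t \<in> carrier_vec (Suc d)"
  shows "form y (E j *\<^sub>v t) = form y t"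
proof -
  obtain w where w: "\<forall>m\<le>d. m \<noteq> j \<longrightarrow> w m \<in> carrier_vec (Suc d) \<and> A *\<^sub>v w m = th m \<cdot>\<^sub>v w m"
    and decomp: "t - E j *\<^sub>v t = lincomb_vec (Suc d) (\<lambda>_. 1) w ({..d} - {j})"
    using E_complement[OF j t] by blast
  have "form y (t - E j *\<^sub>v t) = (\<Sum>m\<in>{..d}-{j}. 1 * form y (w m))"
    unfolding decomp using w by (intro form_lincomb_right) auto
  also have "\<dots> = 0"
    using w y j th_neq by (intro sum.neutral) (auto intro!: form_eigvec_orthogonal)
  finally show ?thesis using j t by (simp add: form_diff_right)
qed

lemma eigvec_form_self_nonzero:
  assumes j: "j \<le> d" and y: "y \<in> carrier_vec (Suc d)" "y \<noteq> 0\<^sub>v (Suc d)" "A *\<^sub>v y = th j \<cdot>\<^sub>v y"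
  shows "form y y \<noteq> 0"
proof -
  obtain t where t: "t \<in> carrier_vec (Suc d)" "form y t \<noteq> 0"
    using form_nondegenerate[OF y(1,2)] by blast
  have "E j *\<^sub>v t = (coord (E j *\<^sub>v t) 0 / coord y 0) \<cdot>\<^sub>v y"
    using j t(1) y A_E_mult_vec by (intro eigvec_eq_smult) auto
  hence "form y t = (coord (E j *\<^sub>v t) 0 / coord y 0) * form y y"
    using form_E_right[OF j y(1,3) t(1)] form_smult_right[OF y(1)] by metis
  thus ?thesis using t(2) by auto
qed

lemma E_mult_eigvec:
  assumes j: "j \<le> d" and y: "y \<in> carrier_vec (Suc d)" "A *\<^sub>v y = th j \<cdot>\<^sub>v y"
  shows "E j *\<^sub>v y = y"
proof -
  define z where "z = y - E j *\<^sub>v y"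
  have z: "z \<in> carrier_vec (Suc d)" using j y by (simp add: z_def)
  have "A *\<^sub>v z = th j \<cdot>\<^sub>v y - th j \<cdot>\<^sub>v (E j *\<^sub>v y)"
    using j y by (simp add: z_def mult_minus_distrib_mat_vec[OF A_carrier'] A_E_mult_vec)
  also have "\<dots> = th j \<cdot>\<^sub>v z"
    unfolding z_def using j y by (intro eq_vecI) (auto simp: right_diff_distrib carrier_matD[OF E_carrier])
  finally have Az: "A *\<^sub>v z = th j \<cdot>\<^sub>v z" .
  have "form z z = form z y - form z (E j *\<^sub>v y)"
    using j y by (simp add: z_def form_diff_right)
  also have "\<dots> = 0" using form_E_right[OF j z Az y(1)] by simp
  finally have "z = 0\<^sub>v (Suc d)" using eigvec_form_self_nonzero[OF j z _ Az] by blast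
  hence "coord (E j *\<^sub>v y) i = coord y i" if "i \<le> d" for i
    using coord_diff[of y "E j *\<^sub>v y" i] coord_zero[of i] j y(1) that by (simp add: z_def)
  thus ?thesis using j y(1) by (intro coord_eqI) auto
qed

end

section \<open>\<open>E\<^sub>0\<close> as a leaf of \<open>\<Delta>\<close>\<close>

locale leaf_frame = spectral_frame d Es v A Y th E
  for d :: nat and Es :: "nat \<Rightarrow> 'a::field mat" and v A Y th E +
  fixes ths :: "nat \<Rightarrow> 'a" and As :: "'a mat"
  assumes As_def: "As = lincomb_mat (d+1) ths Es {..d}"
    and E0_As_E: "\<forall>j\<le>d. j \<noteq> 0 \<and> j \<noteq> 1 \<longrightarrow> E 0 * As * E j = 0\<^sub>m (d+1) (d+1)"
begin

lemma As_carrier [simp]: "As \<in> carrier_mat (Suc d) (Suc d)"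
  by (simp add: As_def lincomb_mat_def)

lemma As_mult_vec_carrier [simp]:
  "x \<in> carrier_vec (Suc d) \<Longrightarrow> As *\<^sub>v x \<in> carrier_vec (Suc d)"
  by (rule mult_mat_vec_carrier[OF As_carrier])

lemma coord_As: "x \<in> carrier_vec (Suc d) \<Longrightarrow> i \<le> d \<Longrightarrow> coord (As *\<^sub>v x) i = ths i * coord x i"
  using coord_lincomb_mat_Es by (simp add: As_def)

lemma form_As_adjoint:
  "x \<in> carrier_vec (Suc d) \<Longrightarrow> y \<in> carrier_vec (Suc d) \<Longrightarrow> form (As *\<^sub>v x) y = form x (As *\<^sub>v y)"
  using form_lincomb_mat_Es_adjoint by (simp add: As_def)

lemma form_eigvec_As_eigvec0:
  assumes m: "2 \<le> m" "m \<le> d" and w: "w \<in> carrier_vec (Suc d)" "A *\<^sub>v w = th m \<cdot>\<^sub>v w"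
    and u: "u \<in> carrier_vec (Suc d)" "A *\<^sub>v u = th 0 \<cdot>\<^sub>v u"
  shows "form w (As *\<^sub>v u) = 0"
proof -
  have As_w: "As *\<^sub>v w \<in> carrier_vec (Suc d)" using w(1) by simp
  have "E 0 *\<^sub>v (As *\<^sub>v w) = E 0 *\<^sub>v (As *\<^sub>v (E m *\<^sub>v w))"
    using E_mult_eigvec[OF m(2) w] by simp
  also have "\<dots> = (E 0 * As * E m) *\<^sub>v w"
    using m w(1)
    by (simp add: assoc_mult_mat_vec[OF mult_carrier_mat[OF E_carrier As_carrier] E_carrier]
        assoc_mult_mat_vec[OF E_carrier As_carrier])
  also have "\<dots> = 0\<^sub>v (Suc d)" using E0_As_E m w(1) by simp
  finally have E0_As_w: "E 0 *\<^sub>v (As *\<^sub>v w) = 0\<^sub>v (Suc d)" .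
  have "form w (As *\<^sub>v u) = form u (As *\<^sub>v w)"
    using form_As_adjoint[OF w(1) u(1)] form_sym by metis
  also have "\<dots> = form u (E 0 *\<^sub>v (As *\<^sub>v w))"
    using form_E_right[OF _ u As_w] by simp
  finally show ?thesis using E0_As_w form_zero_right by simp
qed

lemma As_eigvec0_decomposition:
  assumes d: "1 \<le> d" and u: "u \<in> carrier_vec (Suc d)" "A *\<^sub>v u = th 0 \<cdot>\<^sub>v u"
  obtains p q where "p \<in> carrier_vec (Suc d)" "A *\<^sub>v p = th 0 \<cdot>\<^sub>v p"
    and "q \<in> carrier_vec (Suc d)" "A *\<^sub>v q = th 1 \<cdot>\<^sub>v q" and "As *\<^sub>v u = p + q"
proof -
  define z where "z = As *\<^sub>v u"
  have z: "z \<in> carrier_vec (Suc d)" using u(1) by (simp add: z_def)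
  obtain w where w: "\<forall>m\<le>d. m \<noteq> 0 \<longrightarrow> w m \<in> carrier_vec (Suc d) \<and> A *\<^sub>v w m = th m \<cdot>\<^sub>v w m"
    and decomp: "z - E 0 *\<^sub>v z = lincomb_vec (Suc d) (\<lambda>_. 1) w ({..d} - {0})"
    using E_complement[OF _ z] by blast
  txt \<open>A component \<open>w m\<close> with \<open>m \<ge> 2\<close> is orthogonal to z, to \<open>E 0 z\<close> and to the other
    components, hence isotropic, hence zero.\<close>
  have w_far: "w m = 0\<^sub>v (Suc d)" if m: "2 \<le> m" "m \<le> d" for m
  proof -
    have wm: "w m \<in> carrier_vec (Suc d)" "A *\<^sub>v w m = th m \<cdot>\<^sub>v w m" using w m by auto
    have "form (w m) (z - E 0 *\<^sub>v z) = (\<Sum>k\<in>{..d}-{0}. 1 * form (w m) (w k))"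
      unfolding decomp using w by (intro form_lincomb_right) auto
    also have "\<dots> = (\<Sum>k\<in>{..d}-{0}. if k = m then form (w m) (w m) else 0)"
      using w wm m th_neq by (intro sum.cong refl) (auto intro!: form_eigvec_orthogonal)
    also have "\<dots> = form (w m) (w m)" using m by (simp add: sum.delta')
    finally have "form (w m) (w m) = form (w m) z - form (w m) (E 0 *\<^sub>v z)"
      using z by (simp add: form_diff_right)
    also have "\<dots> = 0"
      using form_eigvec_As_eigvec0[OF m wm u] form_eigvec_orthogonal[OF wm(1) _ wm(2) A_E_mult_vec]
        z m th_neq[of m 0] by (simp add: z_def)
    finally show ?thesis using eigvec_form_self_nonzero[OF m(2) wm(1) _ wm(2)] by blast
  qed
  have "z - E 0 *\<^sub>v z = 1 \<cdot>\<^sub>v w 1"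
    unfolding decomp using d w w_far by (intro lincomb_vec_single) auto
  hence diff: "z - E 0 *\<^sub>v z = w 1" using w d by simp
  have w1: "w 1 \<in> carrier_vec (Suc d)" using w d by simp
  have "z = E 0 *\<^sub>v z + w 1"
  proof (rule eq_vecI)
    fix r assume "r < dim_vec (E 0 *\<^sub>v z + w 1)"
    hence r: "r < Suc d" using w1 by simp
    have "(z - E 0 *\<^sub>v z) $ r = w 1 $ r" using diff by simp
    thus "z $ r = (E 0 *\<^sub>v z + w 1) $ r"
      using r z w1 by (simp add: carrier_matD[OF E_carrier[of 0]] diff_eq_eq add.commute)
  qed (use z w1 in simp)
  moreover have "A *\<^sub>v (E 0 *\<^sub>v z) = th 0 \<cdot>\<^sub>v (E 0 *\<^sub>v z)" using A_E_mult_vec z by simp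
  ultimately show ?thesis
    using that[of "E 0 *\<^sub>v z" "w 1"] z w1 w d unfolding z_def[symmetric] by simp
qed

lemma As_eigvec0_coord_rows:
  assumes d: "1 \<le> d" and u: "u \<in> carrier_vec (Suc d)" "u \<noteq> 0\<^sub>v (Suc d)" "A *\<^sub>v u = th 0 \<cdot>\<^sub>v u"
  obtains \<kappa> where "\<forall>i\<le>d. (\<Sum>j\<le>d. Y i j * (ths j * coord u j)) = th 1 * (ths i * coord u i) + \<kappa> * coord u i"
proof -
  obtain p q where p: "p \<in> carrier_vec (Suc d)" "A *\<^sub>v p = th 0 \<cdot>\<^sub>v p"
    and q: "q \<in> carrier_vec (Suc d)" "A *\<^sub>v q = th 1 \<cdot>\<^sub>v q" and split: "As *\<^sub>v u = p + q"
    using As_eigvec0_decomposition[OF d u(1,3)] by blast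
  define c where "c = coord p 0 / coord u 0"
  have coord_p: "coord p i = c * coord u i" if "i \<le> d" for i
    using arg_cong[where f = "\<lambda>x. coord x i", OF eigvec_eq_smult[OF p u]] coord_smult[OF u(1) that]
    by (simp add: c_def)
  have "(\<Sum>j\<le>d. Y i j * (ths j * coord u j)) = th 1 * (ths i * coord u i) + ((th 0 - th 1) * c) * coord u i"
    if i: "i \<le> d" for i
  proof -
    have "(\<Sum>j\<le>d. Y i j * (ths j * coord u j)) = (\<Sum>j\<le>d. Y i j * coord (As *\<^sub>v u) j)"
      using u(1) by (intro sum.cong) (auto simp: coord_As)
    also have "\<dots> = coord (A *\<^sub>v (As *\<^sub>v u)) i"
      using u(1) i by (simp add: coord_A)
    also have "\<dots> = coord (th 0 \<cdot>\<^sub>v p + th 1 \<cdot>\<^sub>v q) i"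
      using p q split by (simp add: mult_add_distrib_mat_vec[OF A_carrier'])
    also have "\<dots> = th 0 * coord p i + th 1 * coord q i"
      using p q i by (simp add: coord_add coord_smult)
    also have "coord q i = ths i * coord u i - coord p i"
      using coord_add[OF p(1) q(1) i] coord_As[OF u(1) i] split by (simp add: eq_diff_eq add.commute)
    finally show ?thesis using coord_p[OF i] by (simp add: algebra_simps)
  qed
  thus ?thesis using that by blast
qed

lemma As_cosine_rows:
  assumes d: "1 \<le> d" and "normalizing d A Es (th 0)"
    and cos: "\<forall>i<d. (\<Sum>j\<le>d. Y i j * \<alpha> j) = th 0 * \<alpha> i" and \<alpha>0: "\<alpha> 0 = 1"
  shows "\<forall>i\<le>d. (\<Sum>j\<le>d. Y i j * (ths j * \<alpha> j)) =
    th 1 * (ths i * \<alpha> i) + (th 0 * ths 1 - th 1 * ths 0) * \<alpha> i"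
proof -
  obtain u where u: "u \<in> carrier_vec (Suc d)" "A *\<^sub>v u = th 0 \<cdot>\<^sub>v u" "\<forall>i\<le>d. coord u i = \<alpha> i"
    using cosine_eigvec[OF assms(2) cos \<alpha>0] by blast
  have "u \<noteq> 0\<^sub>v (Suc d)" using u(3) \<alpha>0 coord_zero by force
  then obtain \<kappa> where
    "\<forall>i\<le>d. (\<Sum>j\<le>d. Y i j * (ths j * coord u j)) = th 1 * (ths i * coord u i) + \<kappa> * coord u i"
    using As_eigvec0_coord_rows[OF d u(1) _ u(2)] by blast
  moreover have "(\<Sum>j\<le>d. Y i j * (ths j * coord u j)) = (\<Sum>j\<le>d. Y i j * (ths j * \<alpha> j))" for i
    using u(3) by (intro sum.cong) auto
  ultimately have \<kappa>: "\<forall>i\<le>d. (\<Sum>j\<le>d. Y i j * (ths j * \<alpha> j)) = th 1 * (ths i * \<alpha> i) + \<kappa> * \<alpha> i"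
    using u(3) by simp
  have "Y 0 1 * \<alpha> 1 = th 0"
    using cos[rule_format, of 0] row_sum_tridiagonal[of 0] d Y_diag_zero[of 0] \<alpha>0 by simp
  moreover have "Y 0 1 * (ths 1 * \<alpha> 1) = th 1 * ths 0 + \<kappa>"
    using \<kappa>[rule_format, of 0] row_sum_tridiagonal[of 0] d Y_diag_zero[of 0] \<alpha>0 by simp
  ultimately have "\<kappa> = th 0 * ths 1 - th 1 * ths 0"
    by (metis add_diff_cancel_left' mult.commute mult.left_commute)
  thus ?thesis using \<kappa> by simp
qed

end

theorem lemma7p6:
  fixes d :: nat
    and Es :: "nat \<Rightarrow> 'a::field mat"
    and A As :: "'a mat"
    and E :: "nat \<Rightarrow> 'a mat"
    and th ths :: "nat \<Rightarrow> 'a"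
    and v :: "nat \<Rightarrow> 'a vec"
    and Y :: "nat \<Rightarrow> nat \<Rightarrow> 'a"
    and \<alpha> :: "nat \<Rightarrow> 'a"
  assumes d3: "d \<ge> 3"
    and Es_carrier: "\<forall>i\<le>d. Es i \<in> carrier_mat (d+1) (d+1)"
    and Es_orth: "\<forall>i\<le>d. \<forall>j\<le>d. Es i * Es j = (if i = j then Es i else 0\<^sub>m (d+1) (d+1))"
    and Es_rank: "\<forall>i\<le>d. vec_space.rank (d+1) (Es i) = 1"
    and A_carrier: "A \<in> carrier_mat (d+1) (d+1)"
    and tri0: "\<forall>i\<le>d. \<forall>j\<le>d. (i + 1 < j \<or> j + 1 < i) \<longrightarrow> Es i * A * Es j = 0\<^sub>m (d+1) (d+1)"
    and tri1: "\<forall>i\<le>d. \<forall>j\<le>d. (i = j + 1 \<or> j = i + 1) \<longrightarrow> Es i * A * Es j \<noteq> 0\<^sub>m (d+1) (d+1)"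
    and th_distinct: "inj_on th {..d}"
    and th_eig: "\<forall>i\<le>d. eigenvalue A (th i)"
    and E_prim: "\<forall>i\<le>d. eig_projection d A th i (E i)"
    and bipartite: "\<forall>i\<le>d. mat_trace (Es i * A) = 0"
    and ths_distinct: "inj_on ths {..d}"
    and As_def: "As = lincomb_mat (d+1) ths Es {..d}"
    and E0_norm: "normalizing d A Es (th 0)"
    and adj01: "E 0 * As * E 1 \<noteq> 0\<^sub>m (d+1) (d+1)"
    and nonadj: "\<forall>j\<le>d. j \<noteq> 0 \<and> j \<noteq> 1 \<longrightarrow> E 0 * As * E j = 0\<^sub>m (d+1) (d+1)"
    and v_basis: "adapted_basis d Es v"
    and Y_rep: "represents d A v Y"
    and \<alpha>0: "\<alpha> 0 = 1"
    and \<alpha>_rec: "\<forall>i<d. (if i = 0 then 0 else Y i (i - 1)) * \<alpha> (i - 1) + Y i (i + 1) * \<alpha> (i + 1) = th 0 * \<alpha> i"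
  shows "\<forall>i. 1 \<le> i \<and> i \<le> d - 1 \<longrightarrow>
           Y i (i + 1) = (th 1 * (ths i - ths 0) - th 0 * (ths (i - 1) - ths 1)) / (ths (i + 1) - ths (i - 1)) * (\<alpha> i / \<alpha> (i + 1)) \<and>
           Y i (i - 1) = (th 0 * (ths (i + 1) - ths 1) - th 1 * (ths i - ths 0)) / (ths (i + 1) - ths (i - 1)) * (\<alpha> i / \<alpha> (i - 1))"
proof -
  interpret leaf_frame d Es v A Y th E ths As
    using Es_carrier Es_orth v_basis A_carrier tri0 tri1 bipartite Y_rep th_distinct E_prim
      As_def nonadj by unfold_locales
  have d: "1 \<le> d" using d3 by simp
  have cosine_rows: "\<forall>i<d. (\<Sum>j\<le>d. Y i j * \<alpha> j) = th 0 * \<alpha> i"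
    using \<alpha>_rec Y_diag_zero by (auto simp: row_sum_tridiagonal split: if_splits)
  have \<alpha>_nonzero: "\<forall>i\<le>d. \<alpha> i \<noteq> 0"
    using cosine_eigvec[OF E0_norm cosine_rows \<alpha>0] by blast
  show ?thesis
  proof (intro allI impI)
    fix i assume "1 \<le> i \<and> i \<le> d - 1"
    hence i: "1 \<le> i" "i < d" using d by auto
    have eq0: "Y i (i-1) * \<alpha> (i-1) + Y i (i+1) * \<alpha> (i+1) = th 0 * \<alpha> i"
      using \<alpha>_rec i by auto
    have eq1: "Y i (i-1) * (ths (i-1) * \<alpha> (i-1)) + Y i (i+1) * (ths (i+1) * \<alpha> (i+1)) =
        th 1 * (ths i * \<alpha> i) + (th 0 * ths 1 - th 1 * ths 0) * \<alpha> i"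
      using As_cosine_rows[OF d E0_norm cosine_rows \<alpha>0, rule_format, of i]
        row_sum_tridiagonal[OF i(2)] i(2) by simp
    have "ths (i+1) \<noteq> ths (i-1)" using ths_distinct i by (auto dest: inj_onD)
    thus "Y i (i + 1) = (th 1 * (ths i - ths 0) - th 0 * (ths (i - 1) - ths 1)) / (ths (i + 1) - ths (i - 1)) * (\<alpha> i / \<alpha> (i + 1)) \<and>
          Y i (i - 1) = (th 0 * (ths (i + 1) - ths 1) - th 1 * (ths i - ths 0)) / (ths (i + 1) - ths (i - 1)) * (\<alpha> i / \<alpha> (i - 1))"
      using tridiagonal_row_solve[OF eq0 eq1] \<alpha>_nonzero i by auto
  qed
qed

end
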